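(* Consider the planar system $$\frac{dN}{dt}=rN\left(1-\frac{N}{K}-\frac{h}{w+N}\right)-\frac{aNP}{b+N^2},\qquad \frac{dP}{dt}=\frac{cNP}{b+N^2}-\delta P,$$ where $r,K,h,w,a,b,c,\delta$ are positive constants with $w<K$. Let $D_2=c^2-4b\delta^2$, $N_4=\frac{c+\sqrt{D_2}}{2\delta}$, $N_5=\frac{c-\sqrt{D_2}}{2\delta}$, $N_6=\frac{c}{2\delta}$, and for $N>0$ let $$P(N)=\frac{r(b+N^2)\left[(K-w)N-K(h-w)-N^2\right]}{Ka(w+N)}.$$ (i) If $b>\left(\frac{c}{2\delta}\right)^2$, then there are no coexistence equilibrium points. (ii) If $b=\left(\frac{c}{2\delta}\right)^2$ and $P(N_6)>0$, then there is exactly one coexistence equilibrium point, namely $E_6=(N_6,P(N_6))$. (iii) If $b<\left(\frac{c}{2\delta}\right)^2$, $P(N_4)>0$ and $P(N_5)>0$, then there are two coexistence equilibrium points, namely $E_4=(N_4,P(N_4))$ and $E_5=(N_5,P(N_5))$.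
   Context: $N(t)$ is the prey density and $P(t)$ the predator density. A coexistence equilibrium point is an equilibrium $(N,P)$ of the system with $N>0$ and $P>0$. *)

theory Defs
  imports Complex_Main
begin

definition prey_rhs :: "real \<Rightarrow> real \<Rightarrow> real \<Rightarrow> real \<Rightarrow> real \<Rightarrow> real \<Rightarrow> real \<Rightarrow> real \<Rightarrow> real" where
  "prey_rhs r K h w a b N P = r * N * (1 - N / K - h / (w + N)) - a * N * P / (b + N^2)"

definition pred_rhs :: "real \<Rightarrow> real \<Rightarrow> real \<Rightarrow> real \<Rightarrow> real \<Rightarrow> real" where
  "pred_rhs b c \<delta> N P = c * N * P / (b + N^2) - \<delta> * P"

definition coexist_eq :: "real \<Rightarrow> real \<Rightarrow> real \<Rightarrow> real \<Rightarrow> real \<Rightarrow> real \<Rightarrow> real \<Rightarrow> real \<Rightarrow> real \<Rightarrow> real \<Rightarrow> bool" where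
  "coexist_eq r K h w a b c \<delta> N P \<longleftrightarrow>
     N > 0 \<and> P > 0 \<and> prey_rhs r K h w a b N P = 0 \<and> pred_rhs b c \<delta> N P = 0"

definition Pn :: "real \<Rightarrow> real \<Rightarrow> real \<Rightarrow> real \<Rightarrow> real \<Rightarrow> real \<Rightarrow> real \<Rightarrow> real" where
  "Pn r K h w a b N = r * (b + N^2) * ((K - w) * N - K * (h - w) - N^2) / (K * a * (w + N))"

end

theory Submission
  imports Defs "HOL-Library.Quadratic_Discriminant"
begin

text \<open>At a coexistence equilibrium the prey equation forces \<open>P = Pn N\<close>, and dividing the
  predator equation by \<open>P\<close> leaves the quadratic \<open>\<delta> N\<^sup>2 - c N + \<delta> b = 0\<close> in \<open>N\<close>.
  Its discriminant is \<open>D2 = 4 \<delta>\<^sup>2 ((c / (2 \<delta>))\<^sup>2 - b)\<close>, which gives no, one or two roots;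
  the roots are positive because \<open>sqrt D2 < c\<close>, so the coexistence equilibria are exactly
  the points \<open>(N, Pn N)\<close> over these roots at which \<open>Pn N > 0\<close>.\<close>

lemma prey_rhs_eq_Pn:
  fixes r K h w a b N P :: real
  assumes "K \<noteq> 0" "a \<noteq> 0" "w + N \<noteq> 0" "b + N\<^sup>2 \<noteq> 0"
  shows "prey_rhs r K h w a b N P = a * N / (b + N\<^sup>2) * (Pn r K h w a b N - P)"
proof -
  define g where "g = ((K - w) * N - K * (h - w) - N\<^sup>2) / (K * (w + N))"
  have "1 - N / K - h / (w + N) = g"
    unfolding g_def using assms by (simp add: field_simps power2_eq_square)
  moreover have "Pn r K h w a b N = (b + N\<^sup>2) * r * g / a"
    unfolding Pn_def g_def by (simp add: mult_ac)
  ultimately show ?thesis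
    unfolding prey_rhs_def using assms by (simp add: field_simps)
qed

lemma pred_rhs_eq_quadratic:
  fixes b c \<delta> N P :: real
  assumes "b + N\<^sup>2 \<noteq> 0"
  shows "pred_rhs b c \<delta> N P = - P / (b + N\<^sup>2) * (\<delta> * N\<^sup>2 - c * N + \<delta> * b)"
  unfolding pred_rhs_def using assms by (simp add: field_simps)

lemma coexist_eq_iff:
  fixes r K h w a b c \<delta> N P :: real
  assumes "K > 0" "w > 0" "a > 0" "b > 0"
  shows "coexist_eq r K h w a b c \<delta> N P \<longleftrightarrow>
    N > 0 \<and> Pn r K h w a b N > 0 \<and> P = Pn r K h w a b N \<and> \<delta> * N\<^sup>2 - c * N + \<delta> * b = 0"
proof -
  have "b + N\<^sup>2 > 0"
    using assms by (simp add: add_pos_nonneg)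
  moreover have "w + N \<noteq> 0" if "N > 0"
    using that assms by simp
  ultimately show ?thesis
    unfolding coexist_eq_def using assms prey_rhs_eq_Pn pred_rhs_eq_quadratic
    by (auto simp: mult_eq_0_iff)
qed

lemma coexist_eq_set_eq_image_roots:
  fixes r K h w a b c \<delta> :: real and R :: "real set"
  assumes "K > 0" "w > 0" "a > 0" "b > 0"
    and roots: "\<And>N. \<delta> * N\<^sup>2 - c * N + \<delta> * b = 0 \<longleftrightarrow> N \<in> R"
    and pos: "\<And>N. N \<in> R \<Longrightarrow> N > 0 \<and> Pn r K h w a b N > 0"
  shows "{(N, P). coexist_eq r K h w a b c \<delta> N P} = (\<lambda>N. (N, Pn r K h w a b N)) ` R"
  using pos unfolding coexist_eq_iff[OF assms(1-4)] roots by auto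

lemma discrim_eq_scaled_gap:
  fixes b c \<delta> :: real
  assumes "\<delta> \<noteq> 0"
  shows "discrim \<delta> (- c) (\<delta> * b) = 4 * \<delta>\<^sup>2 * ((c / (2 * \<delta>))\<^sup>2 - b)"
  unfolding discrim_def using assms by (simp add: field_simps power2_eq_square)

lemma predator_quadratic_no_root:
  fixes b c \<delta> N :: real
  assumes "\<delta> \<noteq> 0" "b > (c / (2 * \<delta>))\<^sup>2"
  shows "\<delta> * N\<^sup>2 - c * N + \<delta> * b \<noteq> 0"
  using discriminant_negative[OF assms(1), of "- c" "\<delta> * b" N] assms
  by (simp add: discrim_eq_scaled_gap mult_less_0_iff)

lemma predator_quadratic_double_root:
  fixes b c \<delta> N :: real
  assumes "\<delta> \<noteq> 0" "b = (c / (2 * \<delta>))\<^sup>2"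
  shows "\<delta> * N\<^sup>2 - c * N + \<delta> * b = 0 \<longleftrightarrow> N = c / (2 * \<delta>)"
  using discriminant_zero[OF assms(1), of "- c" "\<delta> * b" N] assms
  by (simp add: discrim_eq_scaled_gap)

lemma predator_quadratic_two_roots:
  fixes b c \<delta> N :: real
  assumes "\<delta> \<noteq> 0" "b < (c / (2 * \<delta>))\<^sup>2"
  shows "\<delta> * N\<^sup>2 - c * N + \<delta> * b = 0 \<longleftrightarrow>
    N = (c + sqrt (c\<^sup>2 - 4 * b * \<delta>\<^sup>2)) / (2 * \<delta>) \<or> N = (c - sqrt (c\<^sup>2 - 4 * b * \<delta>\<^sup>2)) / (2 * \<delta>)"
proof -
  have "discrim \<delta> (- c) (\<delta> * b) = c\<^sup>2 - 4 * b * \<delta>\<^sup>2"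
    unfolding discrim_def by (simp add: power2_eq_square)
  moreover have "discrim \<delta> (- c) (\<delta> * b) > 0"
    using assms by (simp add: discrim_eq_scaled_gap)
  ultimately show ?thesis
    using discriminant_nonneg[OF assms(1), of "- c" "\<delta> * b" N] by simp
qed

lemma predator_two_roots_pos_distinct:
  fixes b c \<delta> :: real
  assumes "b > 0" "c > 0" "\<delta> > 0" "b < (c / (2 * \<delta>))\<^sup>2"
  defines "D \<equiv> c\<^sup>2 - 4 * b * \<delta>\<^sup>2"
  shows "(c + sqrt D) / (2 * \<delta>) > 0" "(c - sqrt D) / (2 * \<delta>) > 0"
    and "(c + sqrt D) / (2 * \<delta>) \<noteq> (c - sqrt D) / (2 * \<delta>)"
proof -
  have "D = 4 * \<delta>\<^sup>2 * ((c / (2 * \<delta>))\<^sup>2 - b)"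
    unfolding D_def using assms(3) by (simp add: field_simps power2_eq_square)
  then have "0 < D"
    using assms(3,4) by simp
  moreover have "D < c\<^sup>2"
    unfolding D_def using assms(1-3) by simp
  ultimately have "0 < sqrt D" "sqrt D < c"
    using real_sqrt_less_mono[of D "c\<^sup>2"] assms(2) by simp_all
  then have "c + sqrt D > 0" "c - sqrt D > 0" "sqrt D \<noteq> - sqrt D"
    by linarith+
  then show "(c + sqrt D) / (2 * \<delta>) > 0" "(c - sqrt D) / (2 * \<delta>) > 0"
    and "(c + sqrt D) / (2 * \<delta>) \<noteq> (c - sqrt D) / (2 * \<delta>)"
    using assms(2,3) by (simp_all add: divide_cancel_right)
qed

theorem theorem3:
  fixes r K h w a b c \<delta> :: real
  assumes "r > 0" "K > 0" "h > 0" "w > 0" "a > 0" "b > 0" "c > 0" "\<delta> > 0" "w < K"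
  defines "D2 \<equiv> c^2 - 4 * b * \<delta>^2"
  defines "N4 \<equiv> (c + sqrt D2) / (2 * \<delta>)"
  defines "N5 \<equiv> (c - sqrt D2) / (2 * \<delta>)"
  defines "N6 \<equiv> c / (2 * \<delta>)"
  shows "(b > (c / (2 * \<delta>))^2 \<longrightarrow>
            {(N, P). coexist_eq r K h w a b c \<delta> N P} = {})
       \<and> (b = (c / (2 * \<delta>))^2 \<and> Pn r K h w a b N6 > 0 \<longrightarrow>
            {(N, P). coexist_eq r K h w a b c \<delta> N P} = {(N6, Pn r K h w a b N6)})
       \<and> (b < (c / (2 * \<delta>))^2 \<and> Pn r K h w a b N4 > 0 \<and> Pn r K h w a b N5 > 0 \<longrightarrow>
            {(N, P). coexist_eq r K h w a b c \<delta> N P} =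
              {(N4, Pn r K h w a b N4), (N5, Pn r K h w a b N5)}
            \<and> card {(N, P). coexist_eq r K h w a b c \<delta> N P} = 2)"
proof (intro conjI impI)
  have \<delta>: "\<delta> \<noteq> 0"
    using \<open>\<delta> > 0\<close> by simp
  note coexist_set = coexist_eq_set_eq_image_roots[OF \<open>K > 0\<close> \<open>w > 0\<close> \<open>a > 0\<close> \<open>b > 0\<close>]
  {
    assume "b > (c / (2 * \<delta>))\<^sup>2"
    then have "{(N, P). coexist_eq r K h w a b c \<delta> N P} = (\<lambda>N. (N, Pn r K h w a b N)) ` {}"
      by (intro coexist_set) (auto dest: predator_quadratic_no_root[OF \<delta>])
    then show "{(N, P). coexist_eq r K h w a b c \<delta> N P} = {}"
      by simp
  next
    assume H: "b = (c / (2 * \<delta>))\<^sup>2 \<and> Pn r K h w a b N6 > 0"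
    have "N6 > 0"
      unfolding N6_def using \<open>c > 0\<close> \<open>\<delta> > 0\<close> by simp
    then have "{(N, P). coexist_eq r K h w a b c \<delta> N P} = (\<lambda>N. (N, Pn r K h w a b N)) ` {N6}"
      using H predator_quadratic_double_root[OF \<delta>] unfolding N6_def by (intro coexist_set) auto
    then show "{(N, P). coexist_eq r K h w a b c \<delta> N P} = {(N6, Pn r K h w a b N6)}"
      by simp
  next
    assume H: "b < (c / (2 * \<delta>))\<^sup>2 \<and> Pn r K h w a b N4 > 0 \<and> Pn r K h w a b N5 > 0"
    then have "N4 > 0" "N5 > 0" "N4 \<noteq> N5"
      unfolding N4_def N5_def D2_def
      using predator_two_roots_pos_distinct[OF \<open>b > 0\<close> \<open>c > 0\<close> \<open>\<delta> > 0\<close>] by simp_all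
    moreover have "{(N, P). coexist_eq r K h w a b c \<delta> N P} =
        (\<lambda>N. (N, Pn r K h w a b N)) ` {N4, N5}"
      using H \<open>N4 > 0\<close> \<open>N5 > 0\<close> predator_quadratic_two_roots[OF \<delta>]
      unfolding N4_def N5_def D2_def by (intro coexist_set) auto
    ultimately show "{(N, P). coexist_eq r K h w a b c \<delta> N P} =
        {(N4, Pn r K h w a b N4), (N5, Pn r K h w a b N5)}"
      "card {(N, P). coexist_eq r K h w a b c \<delta> N P} = 2"
      by simp_all
  }
qed

end
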